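(* In the setting described in the context (node-symmetric conflict graph $G$, channel states in $\{0,1\}$, $q_J=q_K$ whenever $G_J\cong G_K$), if all primaries use the strategy $\mathrm{SP}_{sym}$, then every node $a\in V$ is offered by a primary with the same probability $\alpha_a$, and consequently the expected payoff a primary obtains at a node where it offers its channel is the same for every node of $G$.
   Context: Model. $l$ primaries; $m$ secondaries at each node of $G=(V,E)$, integers $1\le m<l$. Each primary's channel state vector $J\in\{0,1\}^V$ (1 = available) has probability $q_J$, i.i.d. across primaries, with $q_{(0,\dots,0)}>0$; $G_J$ is the subgraph induced by $\{a:J_a=1\}$. Constants $c,v$; $g_1$ strictly increasing continuous, $f_1=g_1^{-1}$. At each node the $\min(Y,m)$ lowest-penalty offers among the $Y$ offers with penalty $\le v$ are sold (ties uniformly random); a sale at penalty $x$ earns $f_1(x)-c$. $G$ is node symmetric: for all $a,b$ there is an automorphism $F$ of $G$ with $F(a)=b$. $\mathrm{SP}_{sym}$: with state vector $J\ne0$, a primary selects each maximum (largest-cardinality) independent set of $G_J$ with equal probability and no other set; at a selected node $a$ it draws its penalty from the CDF $\phi^{(a)}$ with $\phi^{(a)}(x)=0$ for $x<g_1(p_a)$, $\frac1{\alpha_a}w^{-1}\!\left(\frac{f_1(x)-p_a}{f_1(x)-c}\right)$ for $g_1(p_a)\le x\le v$, $1$ for $x>v$, where $\alpha_a$ is the probability the selection rule offers at $a$, $p_a=c+(f_1(v)-c)W(\alpha_a)$, $w(x)=\sum_{i=m}^{l-1}\binom{l-1}{i}x^i(1-x)^{l-1-i}$, $W=1-w$. 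*)

theory Defs
  imports "HOL-Analysis.Analysis"
begin

(* A channel state vector J in {0,1}^V is represented by the set of nodes a with J_a = 1;
   the zero vector is the empty set. *)

definition simple_graph :: "('v \<Rightarrow> 'v \<Rightarrow> bool) \<Rightarrow> bool" where
  "simple_graph E \<longleftrightarrow> (\<forall>x y. E x y \<longrightarrow> E y x) \<and> (\<forall>x. \<not> E x x)"

definition graph_automorphism :: "('v \<Rightarrow> 'v \<Rightarrow> bool) \<Rightarrow> ('v \<Rightarrow> 'v) \<Rightarrow> bool" where
  "graph_automorphism E F \<longleftrightarrow> bij F \<and> (\<forall>x y. E x y \<longleftrightarrow> E (F x) (F y))"

definition node_symmetric :: "('v \<Rightarrow> 'v \<Rightarrow> bool) \<Rightarrow> bool" where
  "node_symmetric E \<longleftrightarrow> (\<forall>a b. \<exists>F. graph_automorphism E F \<and> F a = b)"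

definition induced_iso :: "('v \<Rightarrow> 'v \<Rightarrow> bool) \<Rightarrow> 'v set \<Rightarrow> 'v set \<Rightarrow> bool" where
  "induced_iso E J K \<longleftrightarrow>
     (\<exists>h. bij_betw h J K \<and> (\<forall>x\<in>J. \<forall>y\<in>J. E x y \<longleftrightarrow> E (h x) (h y)))"

definition indep_set :: "('v \<Rightarrow> 'v \<Rightarrow> bool) \<Rightarrow> 'v set \<Rightarrow> 'v set \<Rightarrow> bool" where
  "indep_set E J S \<longleftrightarrow> S \<subseteq> J \<and> (\<forall>x\<in>S. \<forall>y\<in>S. \<not> E x y)"

definition max_indep_sets :: "('v \<Rightarrow> 'v \<Rightarrow> bool) \<Rightarrow> 'v set \<Rightarrow> 'v set set" where
  "max_indep_sets E J = {S. indep_set E J S \<and> (\<forall>T. indep_set E J T \<longrightarrow> card T \<le> card S)}"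

(* alpha_a: probability that a primary using the selection rule of SP_sym offers at node a.
   With state J \<noteq> 0 it picks a maximum independent set of G_J uniformly at random;
   with J = 0 it offers nowhere. *)
definition offer_prob :: "('v::finite \<Rightarrow> 'v \<Rightarrow> bool) \<Rightarrow> ('v set \<Rightarrow> real) \<Rightarrow> 'v \<Rightarrow> real" where
  "offer_prob E q a =
     (\<Sum>J\<in>{J. J \<noteq> {}}. q J * real (card {S\<in>max_indep_sets E J. a \<in> S})
                                 / real (card (max_indep_sets E J)))"

definition wfun :: "nat \<Rightarrow> nat \<Rightarrow> real \<Rightarrow> real" where
  "wfun l m x = (\<Sum>i=m..l-1. real ((l-1) choose i) * x ^ i * (1 - x) ^ (l-1-i))"

definition Wfun :: "nat \<Rightarrow> nat \<Rightarrow> real \<Rightarrow> real" where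
  "Wfun l m x = 1 - wfun l m x"

definition winv :: "nat \<Rightarrow> nat \<Rightarrow> real \<Rightarrow> real" where
  "winv l m = the_inv_into {0..1} (wfun l m)"

definition sp_p :: "nat \<Rightarrow> nat \<Rightarrow> real \<Rightarrow> real \<Rightarrow> (real \<Rightarrow> real) \<Rightarrow> real \<Rightarrow> real" where
  "sp_p l m c v f1 \<alpha> = c + (f1 v - c) * Wfun l m \<alpha>"

definition sp_phi :: "nat \<Rightarrow> nat \<Rightarrow> real \<Rightarrow> real \<Rightarrow> (real \<Rightarrow> real) \<Rightarrow> (real \<Rightarrow> real)
                      \<Rightarrow> real \<Rightarrow> real \<Rightarrow> real" where
  "sp_phi l m c v f1 g1 \<alpha> x =
     (let p = sp_p l m c v f1 \<alpha> in
      if x < g1 p then 0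
      else if x \<le> v then (1 / \<alpha>) * winv l m ((f1 x - p) / (f1 x - c))
      else 1)"

(* Probability that an offer of a given primary at a node (with penalty x \<le> v) is sold,
   when each of the other l-1 primaries independently offers at that node with a penalty
   strictly lower than x with probability pL and with penalty equal to x with
   probability pT. k = number of strictly lower offers, t = number of tied offers;
   the min(Y,m) lowest offers are sold with ties broken uniformly at random, so the
   own offer is sold with probability min(1, max(0,m-k)/(t+1)). *)
definition sale_prob :: "nat \<Rightarrow> nat \<Rightarrow> real \<Rightarrow> real \<Rightarrow> real" where
  "sale_prob l m pL pT =
     (\<Sum>k\<le>l-1. \<Sum>t\<le>l-1-k.
        real (fact (l-1)) / (real (fact k) * real (fact t) * real (fact (l-1-k-t)))
        * pL ^ k * pT ^ t * (1 - pL - pT) ^ (l-1-k-t)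
        * min 1 (real (m - k) / real (t + 1)))"

(* Payoff of a primary offering at a node with penalty x, when every other primary offers
   there with probability alpha and draws its penalty from the CDF Phi;
   a sale at penalty x earns f1(x) - c; offers with penalty > v are not sold. *)
definition penalty_payoff :: "nat \<Rightarrow> nat \<Rightarrow> real \<Rightarrow> real \<Rightarrow> (real \<Rightarrow> real)
                      \<Rightarrow> real \<Rightarrow> (real \<Rightarrow> real) \<Rightarrow> real \<Rightarrow> real" where
  "penalty_payoff l m c v f1 \<alpha> Phi x =
     (if x \<le> v then
        (f1 x - c) * sale_prob l m (\<alpha> * Lim (at_left x) Phi)
                                   (\<alpha> * (Phi x - Lim (at_left x) Phi))
      else 0)"

(* Expected payoff a primary obtains at node a where it offers its channel, when all
   primaries use SP_sym: its own penalty has CDF phi^(a), and every other primary offers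
   at a with probability alpha_a and penalty CDF phi^(a). *)
definition node_payoff :: "('v::finite \<Rightarrow> 'v \<Rightarrow> bool) \<Rightarrow> ('v set \<Rightarrow> real) \<Rightarrow> nat \<Rightarrow> nat
                      \<Rightarrow> real \<Rightarrow> real \<Rightarrow> (real \<Rightarrow> real) \<Rightarrow> (real \<Rightarrow> real) \<Rightarrow> 'v \<Rightarrow> real" where
  "node_payoff E q l m c v f1 g1 a =
     (let \<alpha> = offer_prob E q a; Phi = sp_phi l m c v f1 g1 \<alpha> in
      integral\<^sup>L (interval_measure Phi) (penalty_payoff l m c v f1 \<alpha> Phi))"

end

theory Submission
  imports Defs
begin

text \<open>An automorphism F of G maps G_J isomorphically onto G_(F J), so the state vectors J and
  F J are equally likely and F permutes the maximum independent sets of G_J onto those of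
  G_(F J). Summing over all J, the selection rule offers at a and at F a with the same
  probability; node symmetry then makes all offer probabilities equal. The payoff at a node
  depends on the node only through its offer probability.\<close>

lemma graph_automorphism_bij:
  "graph_automorphism E F \<Longrightarrow> bij F"
  by (simp add: graph_automorphism_def)

lemma indep_set_image_iff:
  assumes "graph_automorphism E F"
  shows "indep_set E (F ` J) (F ` S) \<longleftrightarrow> indep_set E J S"
proof -
  have "inj F" using graph_automorphism_bij[OF assms] by (rule bij_is_inj)
  moreover have "\<And>x y. E (F x) (F y) \<longleftrightarrow> E x y"
    using assms by (simp add: graph_automorphism_def)
  ultimately show ?thesis by (auto simp: indep_set_def inj_image_subset_iff)
qed

lemma image_inv_image_bij:
  "bij F \<Longrightarrow> F ` (inv F ` T) = T"
  by (simp add: bij_is_surj image_image surj_f_inv_f)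

lemma max_indep_sets_image:
  assumes "graph_automorphism E F"
  shows "max_indep_sets E (F ` J) = (`) F ` max_indep_sets E J"
proof -
  have "bij F" using assms by (rule graph_automorphism_bij)
  have card_image_F: "card (F ` S) = card S" for S
    using bij_is_inj[OF \<open>bij F\<close>] by (simp add: card_image inj_on_subset)
  have image_mem_iff: "F ` S \<in> max_indep_sets E (F ` J) \<longleftrightarrow> S \<in> max_indep_sets E J" for S
  proof -
    have "(\<forall>T. indep_set E (F ` J) T \<longrightarrow> card T \<le> card (F ` S)) \<longleftrightarrow>
          (\<forall>S'. indep_set E (F ` J) (F ` S') \<longrightarrow> card (F ` S') \<le> card (F ` S))"
      using image_inv_image_bij[OF \<open>bij F\<close>] by metis
    then show ?thesis
      by (simp add: max_indep_sets_def indep_set_image_iff[OF assms] card_image_F)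
  qed
  show ?thesis
  proof
    show "max_indep_sets E (F ` J) \<subseteq> (`) F ` max_indep_sets E J"
    proof
      fix T assume "T \<in> max_indep_sets E (F ` J)"
      then have "inv F ` T \<in> max_indep_sets E J"
        using image_mem_iff image_inv_image_bij[OF \<open>bij F\<close>] by metis
      then show "T \<in> (`) F ` max_indep_sets E J"
        using image_inv_image_bij[OF \<open>bij F\<close>] by (metis image_eqI)
    qed
  qed (auto simp: image_mem_iff)
qed

lemma induced_iso_automorphism_image:
  assumes "graph_automorphism E F"
  shows "induced_iso E J (F ` J)"
proof -
  have "inj F" using graph_automorphism_bij[OF assms] by (rule bij_is_inj)
  then show ?thesis
    using assms unfolding induced_iso_def graph_automorphism_def
    by (intro exI[of _ F]) (auto simp: bij_betw_def inj_on_subset[OF \<open>inj F\<close>])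
qed

lemma offer_prob_automorphism:
  fixes E :: "'v::finite \<Rightarrow> 'v \<Rightarrow> bool"
  assumes aut: "graph_automorphism E F"
    and q_iso: "\<And>J K. induced_iso E J K \<Longrightarrow> q J = q K"
  shows "offer_prob E q (F a) = offer_prob E q a"
proof -
  have "bij F" using aut by (rule graph_automorphism_bij)
  have inj_image: "inj ((`) F)"
    using bij_is_inj[OF \<open>bij F\<close>] by (simp add: inj_def inj_image_eq_iff)
  have nonempty_perm: "bij_betw ((`) F) {J. J \<noteq> {}} {J. J \<noteq> {}}"
  proof (rule bij_betw_imageI)
    show "inj_on ((`) F) {J. J \<noteq> {}}"
      using inj_image by (rule inj_on_subset) simp
    show "(`) F ` {J. J \<noteq> {}} = {J. J \<noteq> {}}"
    proof (intro equalityI subsetI)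
      fix K :: "'v set" assume "K \<in> {J. J \<noteq> {}}"
      then have "inv F ` K \<in> {J. J \<noteq> {}}" by simp
      then show "K \<in> (`) F ` {J. J \<noteq> {}}"
        using image_inv_image_bij[OF \<open>bij F\<close>, of K] by (metis image_eqI)
    qed auto
  qed
  define term_at where "term_at b J = q J * real (card {S\<in>max_indep_sets E J. b \<in> S})
                                 / real (card (max_indep_sets E J))" for b J
  have term_image: "term_at (F a) (F ` J) = term_at a J" for J
  proof -
    have M: "max_indep_sets E (F ` J) = (`) F ` max_indep_sets E J"
      using aut by (rule max_indep_sets_image)
    have "{S\<in>max_indep_sets E (F ` J). F a \<in> S} = (`) F ` {S\<in>max_indep_sets E J. a \<in> S}"
      unfolding M using bij_is_inj[OF \<open>bij F\<close>] by (auto simp: inj_image_mem_iff inj_eq)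
    moreover have "q (F ` J) = q J"
      using q_iso[OF induced_iso_automorphism_image[OF aut]] by simp
    ultimately show ?thesis
      unfolding term_at_def M using inj_image by (simp add: card_image inj_on_subset)
  qed
  have "offer_prob E q (F a) = (\<Sum>J\<in>{J. J \<noteq> {}}. term_at (F a) J)"
    by (simp add: offer_prob_def term_at_def)
  also have "\<dots> = (\<Sum>J\<in>{J. J \<noteq> {}}. term_at (F a) (F ` J))"
    using sum.reindex_bij_betw[OF nonempty_perm, of "term_at (F a)"] by simp
  also have "\<dots> = (\<Sum>J\<in>{J. J \<noteq> {}}. term_at a J)"
    by (simp only: term_image)
  also have "\<dots> = offer_prob E q a"
    by (simp add: offer_prob_def term_at_def)
  finally show ?thesis .
qed

lemma offer_prob_node_symmetric:
  fixes E :: "'v::finite \<Rightarrow> 'v \<Rightarrow> bool"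
  assumes "node_symmetric E"
    and "\<And>J K. induced_iso E J K \<Longrightarrow> q J = q K"
  shows "offer_prob E q a = offer_prob E q b"
proof -
  obtain F where "graph_automorphism E F" "F a = b"
    using assms(1) unfolding node_symmetric_def by blast
  then show ?thesis using offer_prob_automorphism[of E F q a] assms(2) by simp
qed

lemma node_payoff_eqI:
  "offer_prob E q a = offer_prob E q b \<Longrightarrow>
     node_payoff E q l m c v f1 g1 a = node_payoff E q l m c v f1 g1 b"
  by (simp add: node_payoff_def)

theorem lemma12:
  fixes E :: "'v::finite \<Rightarrow> 'v \<Rightarrow> bool"
    and q :: "'v set \<Rightarrow> real"
    and l m :: nat
    and c v :: real
    and f1 g1 :: "real \<Rightarrow> real"
  assumes "simple_graph E"
    and "node_symmetric E"
    and "1 \<le> m" and "m < l"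
    and "\<And>J. q J \<ge> 0" and "(\<Sum>J\<in>UNIV. q J) = 1" and "q {} > 0"
    and "\<And>J K. induced_iso E J K \<Longrightarrow> q J = q K"
    and "strict_mono g1" and "continuous_on UNIV g1"
    and "\<And>x. f1 (g1 x) = x"
  shows "(\<forall>a b. offer_prob E q a = offer_prob E q b)
       \<and> (\<forall>a b. node_payoff E q l m c v f1 g1 a = node_payoff E q l m c v f1 g1 b)"
proof -
  have "offer_prob E q a = offer_prob E q b" for a b
    using assms(2,8) by (rule offer_prob_node_symmetric)
  then show ?thesis using node_payoff_eqI by blast
qed

end
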